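(* Let $\alpha\ge1$, let $B\le B_a$ be positive integers, let $\ell$ and $I$ be integers with $0\le\ell\le B_a$ and $I\ge \ell$, and let $(w_k)_{k\le I}$ be real numbers with $w_k=0$ for $k\le 0$ and $0\le w_1\le w_2\le\cdots\le w_I$. For $0\le j\le I$ let $$\beta^{(j)}:=c\sum_{i=1}^{B_a}w_{j-B_a+i}\,E^{\alpha(B_a-i)/B_a},$$ and define $$\mathrm{PRD}_a:=\frac{1}{\alpha_B}\sum_{i=1}^{I-\ell}\left(w_i-\beta^{(i-1)}\right)+\sum_{i=I-\ell+1}^{I}w_i+(B_a-\ell)\beta^{(I)}.$$ Then $$\mathrm{PRD}_a\le\sum_{i=I-B_a+1}^{I-\ell}\phi_i w_i+\sum_{i=I-\ell+1}^{I}\psi_i w_i+w_{I-B_a}\,\Omega,$$ where $$\phi_i:=(B_a-\ell)\,c\,E^{\alpha(I-i)/B_a}+\frac{1}{\alpha_B}\cdot\frac{E^{\alpha}-E^{\alpha(I-\ell-i)/B_a}}{E^{\alpha}-1},\qquad \psi_i:=1+(B_a-\ell)\,c\,E^{\alpha(I-i)/B_a},$$ $$\Omega:=\frac{1}{\alpha_B}\cdot\frac{1}{E^{\alpha}-1}\left(\ell E^{\alpha}-\frac{E^{\alpha}-E^{\alpha(B_a-\ell)/B_a}}{E^{\alpha/B_a}-1}\right).$$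
   Context: Notation: $E:=(1+1/B_a)^{B_a}$, $c:=\frac{E^{\alpha/B_a}-1}{E^{\alpha}-1}$, $e_B:=(1+1/B)^B$ and $\alpha_B:=B(e_B^{\alpha/B}-1)$. *)

theory Defs
  imports Complex_Main
begin

definition E_const :: "nat \<Rightarrow> real" where
  "E_const Ba = (1 + 1 / real Ba) ^ Ba"

definition c_const :: "real \<Rightarrow> nat \<Rightarrow> real" where
  "c_const \<alpha> Ba = (E_const Ba powr (\<alpha> / real Ba) - 1) / (E_const Ba powr \<alpha> - 1)"

definition e_const :: "nat \<Rightarrow> real" where
  "e_const B = (1 + 1 / real B) ^ B"

definition alpha_B :: "real \<Rightarrow> nat \<Rightarrow> real" where
  "alpha_B \<alpha> B = real B * (e_const B powr (\<alpha> / real B) - 1)"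

definition beta :: "real \<Rightarrow> nat \<Rightarrow> (int \<Rightarrow> real) \<Rightarrow> int \<Rightarrow> real" where
  "beta \<alpha> Ba w j = c_const \<alpha> Ba *
     (\<Sum>i=1..int Ba. w (j - int Ba + i) * E_const Ba powr (\<alpha> * real_of_int (int Ba - i) / real Ba))"

definition PRD_a :: "real \<Rightarrow> nat \<Rightarrow> nat \<Rightarrow> int \<Rightarrow> int \<Rightarrow> (int \<Rightarrow> real) \<Rightarrow> real" where
  "PRD_a \<alpha> B Ba l I w =
     (1 / alpha_B \<alpha> B) * (\<Sum>i=1..I-l. (w i - beta \<alpha> Ba w (i - 1)))
     + (\<Sum>i=I-l+1..I. w i)
     + real_of_int (int Ba - l) * beta \<alpha> Ba w I"

definition phi_coef :: "real \<Rightarrow> nat \<Rightarrow> nat \<Rightarrow> int \<Rightarrow> int \<Rightarrow> int \<Rightarrow> real" where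
  "phi_coef \<alpha> B Ba l I i =
     real_of_int (int Ba - l) * c_const \<alpha> Ba * E_const Ba powr (\<alpha> * real_of_int (I - i) / real Ba)
     + (1 / alpha_B \<alpha> B) *
       ((E_const Ba powr \<alpha> - E_const Ba powr (\<alpha> * real_of_int (I - l - i) / real Ba))
        / (E_const Ba powr \<alpha> - 1))"

definition psi_coef :: "real \<Rightarrow> nat \<Rightarrow> int \<Rightarrow> int \<Rightarrow> int \<Rightarrow> real" where
  "psi_coef \<alpha> Ba l I i =
     1 + real_of_int (int Ba - l) * c_const \<alpha> Ba * E_const Ba powr (\<alpha> * real_of_int (I - i) / real Ba)"

definition Omega_const :: "real \<Rightarrow> nat \<Rightarrow> nat \<Rightarrow> int \<Rightarrow> real" where
  "Omega_const \<alpha> B Ba l =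
     (1 / alpha_B \<alpha> B) * (1 / (E_const Ba powr \<alpha> - 1)) *
     (real_of_int l * E_const Ba powr \<alpha>
      - (E_const Ba powr \<alpha> - E_const Ba powr (\<alpha> * real_of_int (int Ba - l) / real Ba))
        / (E_const Ba powr (\<alpha> / real Ba) - 1))"

end

theory Submission
  imports Defs
begin

(*
  Put q = E^(alpha/B_a), so that E^alpha = q^B_a and c = (q - 1) / (q^B_a - 1): every power
  of E in the statement becomes a power of q.  The first sum of PRD_a then telescopes,

    (q^B_a - 1) * Sum_{i=1..N} (w_i - beta^(i-1)) = Sum_{m<B_a} w_(N-m) * (q^B_a - q^m),   N = I - l.

  After this substitution the two sides agree term by term, except that the l terms of the
  telescoped sum whose index N - m is at most I - B_a carry the weight w_(I-B_a) on the right.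
  As w is nondecreasing and q^B_a - q^m >= 0, this can only increase the sum, and the
  geometric sum of the coefficients of these terms is Omega * alpha_B * (E^alpha - 1).
*)

lemma sum_lessThan_add:
  "(\<Sum>m<a + b. f m) = (\<Sum>m<a. f m) + (\<Sum>m<b. f (a + m))"
  for f :: "nat \<Rightarrow> 'a::comm_monoid_add"
  by (induction b) (simp_all add: ac_simps)

lemma sum_int_interval_reflect:
  "(\<Sum>i=a-int k+1..a. f i) = (\<Sum>m<k. f (a - int m))"
  for f :: "int \<Rightarrow> 'a::comm_monoid_add"
proof (induction k)
  case (Suc k)
  have "{a - int (Suc k) + 1..a} = insert (a - int k) {a - int k + 1..a}"
    by auto
  then show ?case
    using Suc by (simp add: add.commute)
qed simp

definition geom_window :: "'a::comm_ring_1 \<Rightarrow> nat \<Rightarrow> (int \<Rightarrow> 'a) \<Rightarrow> int \<Rightarrow> 'a" where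
  "geom_window q n w j = (\<Sum>m<n. w (j - int m) * q ^ m)"

lemma sum_geom_window_telescoping:
  fixes q :: "'a::comm_ring_1" and w :: "int \<Rightarrow> 'a"
  assumes "\<And>k. k \<le> 0 \<Longrightarrow> w k = 0"
  shows "(\<Sum>i=1..int n. (q^b - 1) * w i - (q - 1) * geom_window q b w (i - 1))
       = (\<Sum>m<b. w (int n - int m) * (q^b - q^m))"
proof (induction n)
  case 0
  show ?case
    using assms by simp
next
  case (Suc n)
  have "(\<Sum>m<b. w (int (Suc n) - int m) * (q^b - q^m))
      = (\<Sum>m<Suc b. w (int n + 1 - int m) * (q^b - q^m))"
    by (simp add: add.commute)
  also have "\<dots> = (q^b - 1) * w (int n + 1) + (\<Sum>m<b. w (int n - int m) * (q^b - q^Suc m))"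
    by (subst sum.lessThan_Suc_shift) (simp add: algebra_simps)
  also have "\<dots> = (q^b - 1) * w (int n + 1) - (q - 1) * geom_window q b w (int n)
                  + (\<Sum>m<b. w (int n - int m) * (q^b - q^m))"
    by (simp add: geom_window_def sum_distrib_left algebra_simps flip: sum_subtractf sum.distrib)
  finally show ?case
    using Suc.IH by (simp add: atLeastAtMostPlus1_int_conv algebra_simps)
qed

lemma le_of_monotone_upto:
  fixes w :: "int \<Rightarrow> 'a::{order, zero}"
  assumes "\<And>k. k \<le> 0 \<Longrightarrow> w k = 0" and "1 \<le> I \<Longrightarrow> 0 \<le> w 1"
    and "\<And>k. 1 \<le> k \<Longrightarrow> k < I \<Longrightarrow> w k \<le> w (k + 1)"
    and "a \<le> b" and "b \<le> I"
  shows "w a \<le> w b"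
  using \<open>a \<le> b\<close> \<open>b \<le> I\<close>
proof (induction b rule: int_ge_induct)
  case (step b)
  then have "w a \<le> w b"
    by simp
  also have "w b \<le> w (b + 1)"
  proof (cases "1 \<le> b")
    case True
    then show ?thesis
      using assms(3) step.prems by simp
  next
    case False
    then show ?thesis
      using assms(1,2) step.prems by (cases "b = 0") auto
  qed
  finally show ?case .
qed simp

lemma antimono_weights_from_end:
  fixes w :: "int \<Rightarrow> 'a::{order, zero}"
  assumes "\<And>k. k \<le> 0 \<Longrightarrow> w k = 0" and "1 \<le> I \<Longrightarrow> 0 \<le> w 1"
    and "\<And>k. 1 \<le> k \<Longrightarrow> k < I \<Longrightarrow> w k \<le> w (k + 1)"
  shows "antimono (\<lambda>m. w (I - int m))"
proof (rule antimonoI)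
  fix m n :: nat
  assume "m \<le> n"
  then have "I - int n \<le> I - int m" and "I - int m \<le> I"
    by simp_all
  then show "w (I - int n) \<le> w (I - int m)"
    using le_of_monotone_upto[of w I] assms by blast
qed

lemma sum_antimono_tail_le:
  fixes v :: "nat \<Rightarrow> real" and q :: real
  assumes "antimono v" and "1 \<le> q" and "L \<le> n"
  shows "(\<Sum>m<n. v (L + m) * (q^n - q^m))
     \<le> (\<Sum>m<n - L. v (L + m) * (q^n - q^m)) + v n * (\<Sum>j<L. q^n - q^(n - L + j))"
proof -
  define k where "k = n - L"
  have n: "n = k + L"
    using assms(3) unfolding k_def by simp
  have "v (L + (k + j)) * (q^n - q^(k + j)) \<le> v n * (q^n - q^(k + j))" if "j < L" for j
  proof (rule mult_right_mono)
    show "v (L + (k + j)) \<le> v n"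
      using antimonoD[OF assms(1), of n "L + (k + j)"] by (simp add: n)
    show "0 \<le> q^n - q^(k + j)"
      using power_increasing[OF _ assms(2), of "k + j" n] that by (simp add: n)
  qed
  then have "(\<Sum>j<L. v (L + (k + j)) * (q^n - q^(k + j))) \<le> (\<Sum>j<L. v n * (q^n - q^(k + j)))"
    by (intro sum_mono) simp
  then show ?thesis
    by (simp add: n sum_lessThan_add sum_distrib_left)
qed

lemma sum_geometric_gap:
  fixes q :: real
  assumes "q \<noteq> 1" and "L \<le> n"
  shows "(\<Sum>j<L. q^n - q^(n - L + j)) = real L * q^n - (q^n - q^(n - L)) / (q - 1)"
proof -
  have "(\<Sum>j<L. q^(n - L + j)) = q^(n - L) * (\<Sum>j<L. q^j)"
    by (simp add: power_add sum_distrib_left)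
  then have "(q - 1) * (\<Sum>j<L. q^(n - L + j)) = q^(n - L) * (q^L - 1)"
    by (simp add: power_diff_1_eq)
  also have "\<dots> = q^n - q^(n - L)"
    using assms(2) by (simp add: algebra_simps flip: power_add)
  finally show ?thesis
    using assms(1) by (simp add: sum_subtractf field_simps)
qed

definition geom_ratio :: "real \<Rightarrow> nat \<Rightarrow> real" where
  "geom_ratio \<alpha> Ba = E_const Ba powr (\<alpha> / real Ba)"

lemma E_const_gt_one: "1 \<le> Ba \<Longrightarrow> 1 < E_const Ba"
  unfolding E_const_def by (intro one_less_power) auto

lemma geom_ratio_gt_one: "1 \<le> Ba \<Longrightarrow> 0 < \<alpha> \<Longrightarrow> 1 < geom_ratio \<alpha> Ba"
  unfolding geom_ratio_def using E_const_gt_one by (intro gr_one_powr) auto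

(* Stated with real_of_int (int n), the form the integer exponents of the definitions take
   once their differences are unfolded to int n; simp would turn it into real n first. *)
lemma E_const_powr_of_nat:
  assumes "1 \<le> Ba"
  shows "E_const Ba powr (\<alpha> * real_of_int (int n) / real Ba) = geom_ratio \<alpha> Ba ^ n"
proof -
  have "E_const Ba powr (\<alpha> * real_of_int (int n) / real Ba) = geom_ratio \<alpha> Ba powr real n"
    unfolding geom_ratio_def by (simp add: powr_powr)
  also have "\<dots> = geom_ratio \<alpha> Ba ^ n"
    unfolding geom_ratio_def using E_const_gt_one[OF assms] by (simp add: powr_realpow)
  finally show ?thesis .
qed

lemma E_const_powr_alpha: "1 \<le> Ba \<Longrightarrow> E_const Ba powr \<alpha> = geom_ratio \<alpha> Ba ^ Ba"
  using E_const_powr_of_nat[of Ba \<alpha> Ba] by simp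

lemma c_const_eq:
  "1 \<le> Ba \<Longrightarrow> c_const \<alpha> Ba = (geom_ratio \<alpha> Ba - 1) / (geom_ratio \<alpha> Ba ^ Ba - 1)"
  unfolding c_const_def by (simp add: E_const_powr_alpha flip: geom_ratio_def)

lemma beta_eq_geom_window:
  assumes "1 \<le> Ba"
  shows "beta \<alpha> Ba w j = c_const \<alpha> Ba * geom_window (geom_ratio \<alpha> Ba) Ba w j"
proof -
  have "(\<Sum>i=1..int Ba. w (j - int Ba + i) * E_const Ba powr (\<alpha> * real_of_int (int Ba - i) / real Ba))
      = (\<Sum>m<Ba. w (j - int m) * E_const Ba powr (\<alpha> * real_of_int (int m) / real Ba))"
    by (subst sum_int_interval_reflect[of _ "int Ba" Ba, simplified]) simp
  also have "\<dots> = geom_window (geom_ratio \<alpha> Ba) Ba w j"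
    unfolding geom_window_def using E_const_powr_of_nat[OF assms] by simp
  finally show ?thesis
    unfolding beta_def by simp
qed

lemma alpha_B_nonneg: "0 \<le> \<alpha> \<Longrightarrow> 0 \<le> alpha_B \<alpha> B"
proof -
  assume "0 \<le> \<alpha>"
  moreover have "1 \<le> e_const B"
    unfolding e_const_def by (intro one_le_power) auto
  ultimately have "1 \<le> e_const B powr (\<alpha> / real B)"
    by (intro ge_one_powr_ge_zero) auto
  then show ?thesis
    unfolding alpha_B_def by simp
qed

lemma sum_diff_beta_eq:
  assumes "1 \<le> Ba" and "0 < \<alpha>" and "\<And>k. k \<le> 0 \<Longrightarrow> w k = 0" and "0 \<le> N"
  defines "q \<equiv> geom_ratio \<alpha> Ba"
  shows "(\<Sum>i=1..N. w i - beta \<alpha> Ba w (i - 1))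
       = (\<Sum>m<Ba. w (N - int m) * (q^Ba - q^m)) / (q^Ba - 1)"
proof -
  have Q: "1 < q^Ba"
    unfolding q_def using assms(1,2) geom_ratio_gt_one by (intro one_less_power) auto
  obtain n where N: "N = int n"
    using assms(4) nonneg_int_cases by blast
  have "(q^Ba - 1) * (\<Sum>i=1..N. w i - beta \<alpha> Ba w (i - 1))
      = (\<Sum>i=1..int n. (q^Ba - 1) * w i - (q - 1) * geom_window q Ba w (i - 1))"
    using Q by (simp add: N beta_eq_geom_window[OF assms(1)] c_const_eq[OF assms(1)]
        sum_distrib_left right_diff_distrib flip: q_def)
  also have "\<dots> = (\<Sum>m<Ba. w (N - int m) * (q^Ba - q^m))"
    unfolding N by (rule sum_geom_window_telescoping[OF assms(3)])
  finally show ?thesis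
    using Q by (simp add: eq_divide_eq mult.commute)
qed

lemma PRD_a_eq:
  assumes "1 \<le> Ba" and "0 < \<alpha>" and "\<And>k. k \<le> 0 \<Longrightarrow> w k = 0"
    and "L \<le> Ba" and "int L \<le> I"
  defines "q \<equiv> geom_ratio \<alpha> Ba"
  shows "PRD_a \<alpha> B Ba (int L) I w
       = (\<Sum>m<Ba. w (I - int (L + m)) * (q^Ba - q^m)) / (alpha_B \<alpha> B * (q^Ba - 1))
         + (\<Sum>m<L. w (I - int m))
         + real (Ba - L) * c_const \<alpha> Ba * (\<Sum>m<L. w (I - int m) * q^m)
         + real (Ba - L) * c_const \<alpha> Ba * (\<Sum>m<Ba - L. w (I - int (L + m)) * q^(L + m))"
proof -
  have "(\<Sum>i=1..I - int L. w i - beta \<alpha> Ba w (i - 1))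
      = (\<Sum>m<Ba. w (I - int (L + m)) * (q^Ba - q^m)) / (q^Ba - 1)"
    using sum_diff_beta_eq[of Ba \<alpha> w "I - int L"] assms(1-3,5) by (simp add: diff_diff_eq flip: q_def)
  moreover have "(\<Sum>i=I-int L+1..I. w i) = (\<Sum>m<L. w (I - int m))"
    by (rule sum_int_interval_reflect)
  moreover have "geom_window q Ba w I
      = (\<Sum>m<L. w (I - int m) * q^m) + (\<Sum>m<Ba - L. w (I - int (L + m)) * q^(L + m))"
    using sum_lessThan_add[of "\<lambda>m. w (I - int m) * q^m" L "Ba - L"] assms(4)
    by (simp add: geom_window_def)
  ultimately show ?thesis
    unfolding PRD_a_def beta_eq_geom_window[OF assms(1)] using assms(4) by (simp add: q_def distrib_left)
qed

lemma sum_phi_coef_eq: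
  fixes \<alpha> :: real
  assumes "1 \<le> Ba" and "L \<le> Ba"
  defines "q \<equiv> geom_ratio \<alpha> Ba"
  shows "(\<Sum>i=I-int Ba+1..I-int L. phi_coef \<alpha> B Ba (int L) I i * w i)
       = real (Ba - L) * c_const \<alpha> Ba * (\<Sum>m<Ba - L. w (I - int (L + m)) * q^(L + m))
         + (\<Sum>m<Ba - L. w (I - int (L + m)) * (q^Ba - q^m)) / (alpha_B \<alpha> B * (q^Ba - 1))"
proof -
  have "(\<Sum>i=I-int Ba+1..I-int L. phi_coef \<alpha> B Ba (int L) I i * w i)
      = (\<Sum>m<Ba - L. phi_coef \<alpha> B Ba (int L) I (I - int (L + m)) * w (I - int (L + m)))"
  proof -
    have ivl: "{I - int Ba + 1..I - int L} = {I - int L - int (Ba - L) + 1..I - int L}"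
      using assms(2) by simp
    show ?thesis
      unfolding ivl sum_int_interval_reflect by (simp add: diff_diff_eq)
  qed
  also have "\<dots> = (\<Sum>m<Ba - L. real (Ba - L) * c_const \<alpha> Ba * (w (I - int (L + m)) * q^(L + m))
      + w (I - int (L + m)) * (q^Ba - q^m) / (alpha_B \<alpha> B * (q^Ba - 1)))"
  proof (rule sum.cong)
    fix m
    have d: "I - (I - int (L + m)) = int (L + m)" "I - int L - (I - int (L + m)) = int m"
      by simp_all
    show "phi_coef \<alpha> B Ba (int L) I (I - int (L + m)) * w (I - int (L + m))
        = real (Ba - L) * c_const \<alpha> Ba * (w (I - int (L + m)) * q^(L + m))
          + w (I - int (L + m)) * (q^Ba - q^m) / (alpha_B \<alpha> B * (q^Ba - 1))"
      unfolding phi_coef_def d E_const_powr_of_nat[OF assms(1)] E_const_powr_alpha[OF assms(1), where \<alpha> = \<alpha>] q_def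
      using assms(2) by (simp add: algebra_simps flip: diff_divide_distrib)
  qed simp
  finally show ?thesis
    by (simp add: sum.distrib sum_distrib_left sum_divide_distrib)
qed

lemma sum_psi_coef_eq:
  fixes \<alpha> :: real
  assumes "1 \<le> Ba" and "L \<le> Ba"
  defines "q \<equiv> geom_ratio \<alpha> Ba"
  shows "(\<Sum>i=I-int L+1..I. psi_coef \<alpha> Ba (int L) I i * w i)
       = (\<Sum>m<L. w (I - int m)) + real (Ba - L) * c_const \<alpha> Ba * (\<Sum>m<L. w (I - int m) * q^m)"
proof -
  have "(\<Sum>i=I-int L+1..I. psi_coef \<alpha> Ba (int L) I i * w i)
      = (\<Sum>m<L. w (I - int m) + real (Ba - L) * c_const \<alpha> Ba * (w (I - int m) * q^m))"
  proof (subst sum_int_interval_reflect, rule sum.cong)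
    fix m
    have d: "I - (I - int m) = int m"
      by simp
    show "psi_coef \<alpha> Ba (int L) I (I - int m) * w (I - int m)
        = w (I - int m) + real (Ba - L) * c_const \<alpha> Ba * (w (I - int m) * q^m)"
      unfolding psi_coef_def d E_const_powr_of_nat[OF assms(1)] q_def
      using assms(2) by (simp add: algebra_simps)
  qed simp
  then show ?thesis
    by (simp add: sum.distrib sum_distrib_left)
qed

lemma Omega_const_eq:
  assumes "1 \<le> Ba" and "0 < \<alpha>" and "L \<le> Ba"
  defines "q \<equiv> geom_ratio \<alpha> Ba"
  shows "Omega_const \<alpha> B Ba (int L)
       = (\<Sum>j<L. q^Ba - q^(Ba - L + j)) / (alpha_B \<alpha> B * (q^Ba - 1))"
proof -
  have "q \<noteq> 1"
    unfolding q_def using geom_ratio_gt_one[OF assms(1,2)] by simp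
  have "int Ba - int L = int (Ba - L)"
    using assms(3) by simp
  then have "E_const Ba powr (\<alpha> * real_of_int (int Ba - int L) / real Ba) = q^(Ba - L)"
    unfolding q_def by (simp only: E_const_powr_of_nat[OF assms(1)])
  moreover have "E_const Ba powr (\<alpha> / real Ba) = q"
    unfolding q_def geom_ratio_def ..
  moreover have "E_const Ba powr \<alpha> = q^Ba"
    unfolding q_def by (rule E_const_powr_alpha[OF assms(1)])
  ultimately show ?thesis
    unfolding Omega_const_def sum_geometric_gap[OF \<open>q \<noteq> 1\<close> assms(3)] by simp
qed

theorem lemmaA6:
  fixes \<alpha> :: real and B Ba :: nat and l I :: int and w :: "int \<Rightarrow> real"
  assumes "\<alpha> \<ge> 1"
    and "0 < B" and "B \<le> Ba"
    and "0 \<le> l" and "l \<le> int Ba"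
    and "I \<ge> l"
    and "\<And>k. k \<le> 0 \<Longrightarrow> w k = 0"
    and "1 \<le> I \<Longrightarrow> 0 \<le> w 1"
    and "\<And>k. 1 \<le> k \<Longrightarrow> k < I \<Longrightarrow> w k \<le> w (k + 1)"
  shows "PRD_a \<alpha> B Ba l I w \<le>
           (\<Sum>i=I-int Ba+1..I-l. phi_coef \<alpha> B Ba l I i * w i)
         + (\<Sum>i=I-l+1..I. psi_coef \<alpha> Ba l I i * w i)
         + w (I - int Ba) * Omega_const \<alpha> B Ba l"
proof -
  obtain L where l: "l = int L" and "L \<le> Ba"
    using assms(4,5) nonneg_int_cases by (metis of_nat_le_iff)
  have Ba: "1 \<le> Ba" and \<alpha>: "0 < \<alpha>" and "int L \<le> I"
    using assms(1-3,6) l by simp_all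
  let ?q = "geom_ratio \<alpha> Ba"
  let ?d = "alpha_B \<alpha> B * (geom_ratio \<alpha> Ba ^ Ba - 1)"
  have "antimono (\<lambda>m. w (I - int m))"
    using antimono_weights_from_end[of w I] assms(7-9) by blast
  moreover have "1 \<le> ?q" and "0 \<le> ?d"
    using geom_ratio_gt_one[OF Ba \<alpha>] alpha_B_nonneg \<alpha> by simp_all
  ultimately have "(\<Sum>m<Ba. w (I - int (L + m)) * (?q^Ba - ?q^m)) / ?d
      \<le> ((\<Sum>m<Ba - L. w (I - int (L + m)) * (?q^Ba - ?q^m))
         + w (I - int Ba) * (\<Sum>j<L. ?q^Ba - ?q^(Ba - L + j))) / ?d"
    using \<open>L \<le> Ba\<close> by (intro divide_right_mono sum_antimono_tail_le[where v = "\<lambda>m. w (I - int m)"])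
  then show ?thesis
    unfolding l add_divide_distrib times_divide_eq_right[symmetric]
      sum_phi_coef_eq[OF Ba \<open>L \<le> Ba\<close>] sum_psi_coef_eq[OF Ba \<open>L \<le> Ba\<close>]
      Omega_const_eq[OF Ba \<alpha> \<open>L \<le> Ba\<close>]
    by (subst PRD_a_eq[OF Ba \<alpha> _ \<open>L \<le> Ba\<close> \<open>int L \<le> I\<close>]) (use assms(7) in auto)
qed

end
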